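(* If a collection $\mathcal Q$ of probability measures on $\{0,1\}^{\mathbb N}$ is separable in its means, then $\mathcal Q$ is UME-learnable.
   Context: $\{0,1\}^{\mathbb N}$ carries the product $\sigma$-algebra. For a probability measure $\mu$ on $\{0,1\}^{\mathbb N}$, $\mathrm{Mean}(\mu)\in[0,1]^{\mathbb N}$ is the vector whose $j$-th coordinate is $\mathbb E[X_j]$ for $X\sim\mu$; $\mathrm{Mean}(\mathcal Q)=\{\mathrm{Mean}(\mu):\mu\in\mathcal Q\}$. For $\varepsilon>0$, a countable $\varepsilon$-cover of $\mathrm{Mean}(\mathcal Q)$ is a countable set $C\subset[0,1]^{\mathbb N}$ such that every $q\in\mathrm{Mean}(\mathcal Q)$ has some $p\in C$ with $\|q-p\|_\infty<\varepsilon$. $\mathcal Q$ is separable in its means if for every $\varepsilon>0$ a countable $\varepsilon$-cover of $\mathrm{Mean}(\mathcal Q)$ exists, and non-separable in its means otherwise. $\mathcal Q$ is UME-learnable if there exist (measurable) estimators $\mathcal A_n:(\{0,1\}^{\mathbb N})^n\to[0,1]^{\mathbb N}$, $n\in\mathbb N$, such that for every $\mu\in\mathcal Q$, $\mathbb E_{S\sim\mu^n}\|\mathcal A_n(S)-\mathrm{Mean}(\mu)\|_\infty\to0$ as $n\to\infty$, where $S$ consists of $n$ i.i.d. draws from $\mu$. *)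

theory Defs
  imports "HOL-Probability.Probability"
begin

text \<open>The Cantor space {0,1}^N with the product sigma-algebra; points are nat => bool,
  coordinate j being 1 iff x j.\<close>
definition cantor :: "(nat \<Rightarrow> bool) measure" where
  "cantor = PiM UNIV (\<lambda>_. count_space UNIV)"

definition prob_on_cantor :: "(nat \<Rightarrow> bool) measure \<Rightarrow> bool" where
  "prob_on_cantor \<mu> \<longleftrightarrow> sets \<mu> = sets cantor \<and> prob_space \<mu>"

definition Mean :: "(nat \<Rightarrow> bool) measure \<Rightarrow> nat \<Rightarrow> real" where
  "Mean \<mu> = (\<lambda>j. \<integral>x. (if x j then 1 else 0) \<partial>\<mu>)"

definition cube :: "(nat \<Rightarrow> real) set" where
  "cube = {p. \<forall>j. p j \<in> {0..1}}"

definition sup_dist :: "(nat \<Rightarrow> real) \<Rightarrow> (nat \<Rightarrow> real) \<Rightarrow> real" where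
  "sup_dist p q = (SUP j. \<bar>p j - q j\<bar>)"

definition separable_in_means :: "(nat \<Rightarrow> bool) measure set \<Rightarrow> bool" where
  "separable_in_means Q \<longleftrightarrow>
     (\<forall>\<epsilon>>0. \<exists>C. countable C \<and> C \<subseteq> cube \<and>
        (\<forall>q \<in> Mean ` Q. \<exists>p\<in>C. sup_dist q p < \<epsilon>))"

text \<open>A sample of size n is a function on {..<n}; n i.i.d. draws from mu is PiM {..<n} (\<lambda>_. mu).
  Estimators are measurable into [0,1]^N with the product Borel sigma-algebra.\<close>
definition UME_learnable :: "(nat \<Rightarrow> bool) measure set \<Rightarrow> bool" where
  "UME_learnable Q \<longleftrightarrow>
     (\<exists>A :: nat \<Rightarrow> (nat \<Rightarrow> nat \<Rightarrow> bool) \<Rightarrow> nat \<Rightarrow> real.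
        (\<forall>n. A n \<in> PiM {..<n} (\<lambda>_. cantor) \<rightarrow>\<^sub>M PiM UNIV (\<lambda>_. borel)) \<and>
        (\<forall>n S. A n S \<in> cube) \<and>
        (\<forall>\<mu>\<in>Q. (\<lambda>n. \<integral>\<^sup>+ S. ennreal (sup_dist (A n S) (Mean \<mu>)) \<partial>(PiM {..<n} (\<lambda>_. \<mu>)))
                   \<longlonglongrightarrow> 0))"

end

theory Submission
  imports Defs "HOL-Real_Asymp.Real_Asymp"
begin

text \<open>Fix a sequence c_0, c_1, ... in the cube that approximates every mean vector of Q
  arbitrarily well. With n samples, the candidates c_i with i \<le> N, N about the cube root of n,
  compete on a set T of at most (N + 1)^2 coordinates, one for each pair (i, j) nearly realising
  the sup-distance of c_i and c_j; the candidate closest on T to the empirical mean e wins.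
  Because T witnesses all pairwise distances, the winner is within 3 d(c_i, q) + 2\<rho> of the true
  mean q for every i \<le> N, up to the slack of the witnesses, where \<rho> bounds |e - q| on T.
  Each coordinate of e has variance at most 1/n and \<rho> \<le> \<delta>/2 + \<Sum>_{t \<in> T} (e_t - q_t)^2/(2\<delta>),
  so the expected error is at most 3 d(c_i, q) + \<delta> + |T|/(n\<delta>), and |T|/n \<rightarrow> 0.\<close>

lemma abs_diff_le_1_if_in_cube:
  assumes "p \<in> cube" "q \<in> cube"
  shows "\<bar>p j - q j\<bar> \<le> 1"
proof -
  have "p j \<in> {0..1}" "q j \<in> {0..1}" using assms unfolding cube_def by auto
  then show ?thesis by auto
qed

lemma abs_diff_le_sup_dist:
  assumes "p \<in> cube" "q \<in> cube"
  shows "\<bar>p j - q j\<bar> \<le> sup_dist p q"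
  unfolding sup_dist_def
  by (rule cSUP_upper) (auto intro!: bdd_aboveI[where M=1] abs_diff_le_1_if_in_cube assms)

lemma sup_dist_le:
  assumes "\<And>j. \<bar>p j - q j\<bar> \<le> B"
  shows "sup_dist p q \<le> B"
  unfolding sup_dist_def by (rule cSUP_least) (auto intro: assms)

lemma sup_dist_nonneg: "p \<in> cube \<Longrightarrow> q \<in> cube \<Longrightarrow> 0 \<le> sup_dist p q"
  using abs_diff_le_sup_dist[of p q 0] by linarith

lemma sup_dist_le_1: "p \<in> cube \<Longrightarrow> q \<in> cube \<Longrightarrow> sup_dist p q \<le> 1"
  by (intro sup_dist_le abs_diff_le_1_if_in_cube)

lemma sup_dist_commute: "sup_dist p q = sup_dist q p"
  unfolding sup_dist_def by (simp add: abs_minus_commute)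

lemma sup_dist_triangle:
  assumes "p \<in> cube" "q \<in> cube" "r \<in> cube"
  shows "sup_dist p r \<le> sup_dist p q + sup_dist q r"
proof (rule sup_dist_le)
  fix j
  show "\<bar>p j - r j\<bar> \<le> sup_dist p q + sup_dist q r"
    using abs_diff_le_sup_dist[of p q j] abs_diff_le_sup_dist[of q r j] assms by linarith
qed

lemma exists_coordinate_near_sup_dist:
  assumes "p \<in> cube" "q \<in> cube" "\<eta> > 0"
  shows "\<exists>t. sup_dist p q - \<eta> < \<bar>p t - q t\<bar>"
proof -
  have "bdd_above (range (\<lambda>j. \<bar>p j - q j\<bar>))"
    by (auto intro!: bdd_aboveI[where M=1] abs_diff_le_1_if_in_cube assms)
  then show ?thesis
    using less_cSUP_iff[of UNIV "\<lambda>j. \<bar>p j - q j\<bar>" "sup_dist p q - \<eta>"] \<open>\<eta> > 0\<close>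
    unfolding sup_dist_def by auto
qed

section \<open>Mean squared error of a sample mean\<close>

lemma (in prob_space) integral_PiM_mult_components:
  fixes g h :: "'a \<Rightarrow> real"
  assumes "finite I" "k \<in> I" "l \<in> I" "k \<noteq> l" "integrable M g" "integrable M h"
  shows "(\<integral>S. g (S k) * h (S l) \<partial>PiM I (\<lambda>_. M)) = expectation g * expectation h"
proof -
  interpret product_sigma_finite "\<lambda>_. M"
    by (simp add: product_sigma_finite_def sigma_finite_measure_axioms)
  define f where "f i = (if i = k then g else if i = l then h else (\<lambda>_. 1))" for i
  have "(\<Prod>i\<in>I. f i (S i)) = g (S k) * h (S l)" for S
  proof -
    have "(\<Prod>i\<in>I. f i (S i)) = (\<Prod>i\<in>{k, l}. f i (S i))"
      by (rule prod.mono_neutral_right) (use assms in \<open>auto simp: f_def\<close>)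
    then show ?thesis using \<open>k \<noteq> l\<close> by (simp add: f_def)
  qed
  then have "(\<integral>S. g (S k) * h (S l) \<partial>PiM I (\<lambda>_. M)) = (\<integral>S. (\<Prod>i\<in>I. f i (S i)) \<partial>PiM I (\<lambda>_. M))"
    by simp
  also have "\<dots> = (\<Prod>i\<in>I. integral\<^sup>L M (f i))"
    by (rule product_integral_prod) (use assms in \<open>auto simp: f_def\<close>)
  also have "\<dots> = (\<Prod>i\<in>{k, l}. integral\<^sup>L M (f i))"
    by (rule prod.mono_neutral_right) (use assms in \<open>auto simp: f_def prob_space\<close>)
  also have "\<dots> = expectation g * expectation h"
    using \<open>k \<noteq> l\<close> by (simp add: f_def)
  finally show ?thesis .
qed

lemma (in prob_space) integral_sum_components_square_le:
  fixes Y :: "'a \<Rightarrow> real"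
  assumes "finite I" and Y: "Y \<in> borel_measurable M" "\<And>x. x \<in> space M \<Longrightarrow> \<bar>Y x\<bar> \<le> 1"
    and centered: "expectation Y = 0"
  shows "integrable (PiM I (\<lambda>_. M)) (\<lambda>S. (\<Sum>k\<in>I. Y (S k))\<^sup>2)"
    and "(\<integral>S. (\<Sum>k\<in>I. Y (S k))\<^sup>2 \<partial>PiM I (\<lambda>_. M)) \<le> card I"
proof -
  let ?P = "PiM I (\<lambda>_. M)"
  interpret P: prob_space ?P by (rule prob_space_PiM) (rule prob_space_axioms)
  have integrable_Y: "integrable M Y"
    using Y by (intro integrable_const_bound[where B=1]) auto
  have product_bound: "\<bar>Y (S k) * Y (S l)\<bar> \<le> 1" if "S \<in> space ?P" "k \<in> I" "l \<in> I" for S k l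
    using Y(2) that unfolding abs_mult by (intro mult_le_one) (auto simp: space_PiM)
  have integrable_prod: "integrable ?P (\<lambda>S. Y (S k) * Y (S l))" if "k \<in> I" "l \<in> I" for k l
  proof (rule P.integrable_const_bound[where B=1])
    show "AE S in ?P. norm (Y (S k) * Y (S l)) \<le> 1"
      using product_bound that by auto
  qed (use that Y in measurable)
  have moment: "(\<integral>S. Y (S k) * Y (S l) \<partial>?P) \<le> (if k = l then 1 else 0)"
    if "k \<in> I" "l \<in> I" for k l
  proof (cases "k = l")
    case True
    have "(\<integral>S. Y (S k) * Y (S l) \<partial>?P) \<le> 1"
      using product_bound[OF _ that] integrable_prod[OF that]
      by (intro P.integral_le_const) (auto simp: abs_le_iff)
    with True show ?thesis by simp
  next
    case False
    then show ?thesis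
      using integral_PiM_mult_components[OF \<open>finite I\<close> that False integrable_Y integrable_Y] centered
      by simp
  qed
  have square: "(\<Sum>k\<in>I. Y (S k))\<^sup>2 = (\<Sum>k\<in>I. \<Sum>l\<in>I. Y (S k) * Y (S l))" for S
    by (simp add: power2_eq_square sum_product)
  show "integrable ?P (\<lambda>S. (\<Sum>k\<in>I. Y (S k))\<^sup>2)"
    unfolding square by (intro Bochner_Integration.integrable_sum integrable_prod)
  have "(\<integral>S. (\<Sum>k\<in>I. Y (S k))\<^sup>2 \<partial>?P) = (\<Sum>k\<in>I. \<Sum>l\<in>I. \<integral>S. Y (S k) * Y (S l) \<partial>?P)"
    unfolding square
    by (simp add: Bochner_Integration.integral_sum Bochner_Integration.integrable_sum integrable_prod)
  also have "\<dots> \<le> (\<Sum>k\<in>I. \<Sum>l\<in>I. if k = l then 1 else 0)"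
    by (intro sum_mono moment)
  also have "\<dots> = card I"
    using \<open>finite I\<close> by simp
  finally show "(\<integral>S. (\<Sum>k\<in>I. Y (S k))\<^sup>2 \<partial>?P) \<le> card I" .
qed

lemma (in prob_space) sample_mean_square_error:
  fixes f :: "'a \<Rightarrow> real" and n :: nat
  assumes f: "f \<in> borel_measurable M" "\<And>x. x \<in> space M \<Longrightarrow> f x \<in> {0..1}" and "n > 0"
  shows "integrable (PiM {..<n} (\<lambda>_. M)) (\<lambda>S. ((\<Sum>k<n. f (S k)) / real n - expectation f)\<^sup>2)"
    and "(\<integral>S. ((\<Sum>k<n. f (S k)) / real n - expectation f)\<^sup>2 \<partial>PiM {..<n} (\<lambda>_. M)) \<le> 1 / real n"
proof -
  define Y where "Y x = f x - expectation f" for x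
  have integrable_f: "integrable M f"
    using f by (intro integrable_const_bound[where B=1]) auto
  have "expectation f \<in> {0..1}"
    using f integrable_f by (auto intro!: integral_nonneg_AE integral_le_const)
  then have Y_bound: "\<bar>Y x\<bar> \<le> 1" if "x \<in> space M" for x
    using f(2)[OF that] unfolding Y_def by auto
  have Y_centered: "expectation Y = 0"
    using integrable_f unfolding Y_def by (simp add: prob_space)
  have error: "((\<Sum>k<n. f (S k)) / real n - expectation f)\<^sup>2 = (\<Sum>k<n. Y (S k))\<^sup>2 / (real n)\<^sup>2" for S
    using \<open>n > 0\<close> by (simp add: Y_def sum_subtractf power_divide field_simps)
  have "Y \<in> borel_measurable M"
    unfolding Y_def using f(1) by simp
  note sum_square = integral_sum_components_square_le[OF _ this Y_bound Y_centered, of "{..<n}"]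
  show "integrable (PiM {..<n} (\<lambda>_. M)) (\<lambda>S. ((\<Sum>k<n. f (S k)) / real n - expectation f)\<^sup>2)"
    unfolding error using sum_square(1) by simp
  have "(\<integral>S. ((\<Sum>k<n. f (S k)) / real n - expectation f)\<^sup>2 \<partial>PiM {..<n} (\<lambda>_. M)) \<le> n / (real n)\<^sup>2"
    unfolding error using sum_square(2) by (simp add: divide_right_mono)
  also have "\<dots> = 1 / real n"
    by (simp add: power2_eq_square)
  finally show "(\<integral>S. ((\<Sum>k<n. f (S k)) / real n - expectation f)\<^sup>2 \<partial>PiM {..<n} (\<lambda>_. M)) \<le> 1 / real n" .
qed

section \<open>Minimum distance selection\<close>

definition sup_dist_on :: "nat set \<Rightarrow> (nat \<Rightarrow> real) \<Rightarrow> (nat \<Rightarrow> real) \<Rightarrow> real" where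
  "sup_dist_on T p q = Max ((\<lambda>t. \<bar>p t - q t\<bar>) ` T)"

lemma abs_diff_le_sup_dist_on: "finite T \<Longrightarrow> t \<in> T \<Longrightarrow> \<bar>p t - q t\<bar> \<le> sup_dist_on T p q"
  unfolding sup_dist_on_def by (intro Max_ge) auto

lemma sup_dist_on_le:
  assumes "finite T" "T \<noteq> {}" "\<And>t. t \<in> T \<Longrightarrow> \<bar>p t - q t\<bar> \<le> B"
  shows "sup_dist_on T p q \<le> B"
  unfolding sup_dist_on_def using assms by (subst Max_le_iff) auto

definition min_dist_index :: "nat \<Rightarrow> nat set \<Rightarrow> (nat \<Rightarrow> nat \<Rightarrow> real) \<Rightarrow> (nat \<Rightarrow> real) \<Rightarrow> nat" where
  "min_dist_index N T c e =
     (LEAST i. i \<le> N \<and> (\<forall>j\<le>N. sup_dist_on T (c i) e \<le> sup_dist_on T (c j) e))"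

lemma min_dist_index:
  shows "min_dist_index N T c e \<le> N"
    and "j \<le> N \<Longrightarrow> sup_dist_on T (c (min_dist_index N T c e)) e \<le> sup_dist_on T (c j) e"
proof -
  let ?d = "\<lambda>i. sup_dist_on T (c i) e"
  obtain i where "i \<in> {..N}" "\<forall>j\<in>{..N}. \<not> ?d j < ?d i"
    using ex_min_if_finite[of "?d ` {..N}"] by auto
  then have "\<exists>i. i \<le> N \<and> (\<forall>j\<le>N. ?d i \<le> ?d j)"
    by (auto simp: not_less)
  from LeastI_ex[OF this] show "min_dist_index N T c e \<le> N"
    and "j \<le> N \<Longrightarrow> ?d (min_dist_index N T c e) \<le> ?d j"
    unfolding min_dist_index_def by auto
qed

lemma sup_dist_min_dist_index_le:
  assumes c: "\<And>i. c i \<in> cube" and q: "q \<in> cube" and "finite T"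
    and witness: "\<And>i j. i \<le> N \<Longrightarrow> j \<le> N \<Longrightarrow> \<exists>t\<in>T. sup_dist (c i) (c j) - \<eta> < \<bar>c i t - c j t\<bar>"
    and "i\<^sub>0 \<le> N" and close: "\<And>t. t \<in> T \<Longrightarrow> \<bar>e t - q t\<bar> \<le> \<rho>"
  shows "sup_dist (c (min_dist_index N T c e)) q \<le> 3 * sup_dist (c i\<^sub>0) q + \<eta> + 2 * \<rho>"
proof -
  let ?i = "min_dist_index N T c e"
  obtain t where t: "t \<in> T" "sup_dist (c ?i) (c i\<^sub>0) - \<eta> < \<bar>c ?i t - c i\<^sub>0 t\<bar>"
    using witness[OF min_dist_index(1) \<open>i\<^sub>0 \<le> N\<close>] by blast
  have best_fit: "sup_dist_on T (c i\<^sub>0) e \<le> sup_dist (c i\<^sub>0) q + \<rho>"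
  proof (rule sup_dist_on_le)
    fix s assume "s \<in> T"
    then show "\<bar>c i\<^sub>0 s - e s\<bar> \<le> sup_dist (c i\<^sub>0) q + \<rho>"
      using abs_diff_le_sup_dist[OF c q, of i\<^sub>0 s] close[of s] by linarith
  qed (use \<open>finite T\<close> t in auto)
  have "\<bar>c ?i t - c i\<^sub>0 t\<bar> \<le> sup_dist_on T (c ?i) e + sup_dist_on T (c i\<^sub>0) e"
    using abs_diff_le_sup_dist_on[OF \<open>finite T\<close> t(1), of "c ?i" e]
      abs_diff_le_sup_dist_on[OF \<open>finite T\<close> t(1), of "c i\<^sub>0" e] by linarith
  also have "\<dots> \<le> 2 * sup_dist_on T (c i\<^sub>0) e"
    using min_dist_index(2)[OF \<open>i\<^sub>0 \<le> N\<close>, of T c e] by simp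
  finally have "sup_dist (c ?i) (c i\<^sub>0) \<le> 2 * sup_dist (c i\<^sub>0) q + \<eta> + 2 * \<rho>"
    using t(2) best_fit by linarith
  then show ?thesis
    using sup_dist_triangle[OF c c q, of ?i i\<^sub>0] by linarith
qed

lemma abs_le_half_plus_square_div:
  fixes x \<delta> :: real
  assumes "\<delta> > 0"
  shows "\<bar>x\<bar> \<le> \<delta> / 2 + x\<^sup>2 / (2 * \<delta>)"
proof -
  have "0 \<le> (\<bar>x\<bar> - \<delta>)\<^sup>2" by simp
  then have "2 * \<delta> * \<bar>x\<bar> \<le> x\<^sup>2 + \<delta>\<^sup>2" by (simp add: power2_eq_square algebra_simps)
  then show ?thesis
    using assms by (simp add: field_simps power2_eq_square)
qed

section \<open>The estimator\<close>

lemma prob_on_cantorD: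
  assumes "prob_on_cantor \<mu>"
  shows "prob_space \<mu>" and "sets \<mu> = sets cantor"
  using assms unfolding prob_on_cantor_def by auto

lemma measurable_coordinate_indicator [measurable]:
  "(\<lambda>x. if x t then 1 else 0 :: real) \<in> borel_measurable cantor"
  unfolding cantor_def by measurable

lemma measurable_coordinate_indicator_prob_on_cantor [measurable]:
  assumes "prob_on_cantor \<mu>"
  shows "(\<lambda>x. if x t then 1 else 0 :: real) \<in> borel_measurable \<mu>"
  using measurable_cong_sets[OF prob_on_cantorD(2)[OF assms] refl] measurable_coordinate_indicator
  by blast

lemma Mean_in_cube:
  assumes "prob_on_cantor \<mu>"
  shows "Mean \<mu> \<in> cube"
proof -
  interpret prob_space \<mu> using prob_on_cantorD(1)[OF assms] .
  have "Mean \<mu> t \<in> {0..1}" for t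
    unfolding Mean_def
    using assms by (auto intro!: integral_nonneg_AE integral_le_const integrable_const_bound[where B=1])
  then show ?thesis unfolding cube_def by auto
qed

definition empirical_mean :: "nat \<Rightarrow> (nat \<Rightarrow> nat \<Rightarrow> bool) \<Rightarrow> nat \<Rightarrow> real" where
  "empirical_mean n S t = (\<Sum>k<n. if S k t then 1 else 0) / real n"

definition witness_coord :: "(nat \<Rightarrow> nat \<Rightarrow> real) \<Rightarrow> real \<Rightarrow> nat \<Rightarrow> nat \<Rightarrow> nat" where
  "witness_coord c \<eta> i j = (SOME t. sup_dist (c i) (c j) - \<eta> < \<bar>c i t - c j t\<bar>)"

definition test_coords :: "(nat \<Rightarrow> nat \<Rightarrow> real) \<Rightarrow> real \<Rightarrow> nat \<Rightarrow> nat set" where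
  "test_coords c \<eta> N = (\<lambda>(i, j). witness_coord c \<eta> i j) ` ({..N} \<times> {..N})"

definition grid_size :: "nat \<Rightarrow> nat" where
  "grid_size n = nat \<lfloor>real n powr (1/3)\<rfloor>"

definition estimator_index :: "(nat \<Rightarrow> nat \<Rightarrow> real) \<Rightarrow> nat \<Rightarrow> (nat \<Rightarrow> nat \<Rightarrow> bool) \<Rightarrow> nat" where
  "estimator_index c n S =
     min_dist_index (grid_size n) (test_coords c (1 / (real n + 1)) (grid_size n)) c
       (empirical_mean n S)"

definition estimator :: "(nat \<Rightarrow> nat \<Rightarrow> real) \<Rightarrow> nat \<Rightarrow> (nat \<Rightarrow> nat \<Rightarrow> bool) \<Rightarrow> nat \<Rightarrow> real" where
  "estimator c n S = c (estimator_index c n S)"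

lemma witness_coord:
  assumes "c i \<in> cube" "c j \<in> cube" "\<eta> > 0"
  shows "sup_dist (c i) (c j) - \<eta> < \<bar>c i (witness_coord c \<eta> i j) - c j (witness_coord c \<eta> i j)\<bar>"
  unfolding witness_coord_def by (rule someI_ex) (rule exists_coordinate_near_sup_dist[OF assms])

lemma finite_test_coords: "finite (test_coords c \<eta> N)"
  by (simp add: test_coords_def)

lemma card_test_coords_le: "card (test_coords c \<eta> N) \<le> (N + 1)\<^sup>2"
proof -
  have "card (test_coords c \<eta> N) \<le> card ({..N} \<times> {..N})"
    unfolding test_coords_def by (rule card_image_le) simp
  then show ?thesis by (simp add: power2_eq_square)
qed

lemma test_coords_witness:
  assumes "\<And>i. c i \<in> cube" "\<eta> > 0" "i \<le> N" "j \<le> N"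
  shows "\<exists>t\<in>test_coords c \<eta> N. sup_dist (c i) (c j) - \<eta> < \<bar>c i t - c j t\<bar>"
  using witness_coord[of c i j \<eta>] assms unfolding test_coords_def by force

lemma measurable_empirical_mean [measurable]:
  "(\<lambda>S. empirical_mean n S t) \<in> borel_measurable (PiM {..<n} (\<lambda>_. cantor))"
  unfolding empirical_mean_def by measurable

lemma measurable_min_dist_index:
  assumes "finite T" "\<And>t. (\<lambda>x. e x t) \<in> borel_measurable M"
  shows "(\<lambda>x. min_dist_index N T c (e x)) \<in> M \<rightarrow>\<^sub>M count_space UNIV"
proof -
  have [measurable]: "(\<lambda>x. sup_dist_on T (c i) (e x)) \<in> borel_measurable M" for i
    unfolding sup_dist_on_def using assms by measurable
  show ?thesis
    unfolding min_dist_index_def by measurable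
qed

lemma measurable_estimator_index:
  "estimator_index c n \<in> PiM {..<n} (\<lambda>_. cantor) \<rightarrow>\<^sub>M count_space UNIV"
  unfolding estimator_index_def by (rule measurable_min_dist_index[OF finite_test_coords]) simp

lemma measurable_estimator:
  "estimator c n \<in> PiM {..<n} (\<lambda>_. cantor) \<rightarrow>\<^sub>M PiM UNIV (\<lambda>_. borel)"
  unfolding estimator_def
  by (rule measurable_compose[OF measurable_estimator_index]) (auto simp: space_PiM)

lemma estimator_in_cube: "(\<And>i. c i \<in> cube) \<Longrightarrow> estimator c n S \<in> cube"
  by (simp add: estimator_def)

lemma integrable_sup_dist_estimator:
  assumes \<mu>: "prob_on_cantor \<mu>" and c: "\<And>i. c i \<in> cube"
  shows "integrable (PiM {..<n} (\<lambda>_. \<mu>)) (\<lambda>S. sup_dist (estimator c n S) (Mean \<mu>))"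
proof -
  interpret prob_space \<mu> using prob_on_cantorD(1)[OF \<mu>] .
  let ?P = "PiM {..<n} (\<lambda>_. \<mu>)"
  interpret P: prob_space ?P by (rule prob_space_PiM) (rule prob_space_axioms)
  have "sets ?P = sets (PiM {..<n} (\<lambda>_. cantor))"
    using prob_on_cantorD(2)[OF \<mu>] by (intro sets_PiM_cong) auto
  then have "estimator_index c n \<in> ?P \<rightarrow>\<^sub>M count_space UNIV"
    using measurable_estimator_index measurable_cong_sets by blast
  then have "(\<lambda>S. sup_dist (estimator c n S) (Mean \<mu>)) \<in> borel_measurable ?P"
    unfolding estimator_def by (rule measurable_compose) simp
  then show ?thesis
    using estimator_in_cube[where c = c, OF c] Mean_in_cube[OF \<mu>] sup_dist_nonneg sup_dist_le_1
    by (intro P.integrable_const_bound[where B=1]) auto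
qed

lemma integral_sup_dist_estimator_nonneg:
  assumes \<mu>: "prob_on_cantor \<mu>" and c: "\<And>i. c i \<in> cube"
  shows "0 \<le> (\<integral>S. sup_dist (estimator c n S) (Mean \<mu>) \<partial>PiM {..<n} (\<lambda>_. \<mu>))"
  using estimator_in_cube[where c = c, OF c] Mean_in_cube[OF \<mu>] by (intro integral_nonneg_AE AE_I2) (simp add: sup_dist_nonneg)

lemma nn_integral_sup_dist_estimator_eq:
  assumes \<mu>: "prob_on_cantor \<mu>" and c: "\<And>i. c i \<in> cube"
  shows "(\<integral>\<^sup>+S. ennreal (sup_dist (estimator c n S) (Mean \<mu>)) \<partial>PiM {..<n} (\<lambda>_. \<mu>))
      = ennreal (\<integral>S. sup_dist (estimator c n S) (Mean \<mu>) \<partial>PiM {..<n} (\<lambda>_. \<mu>))"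
  using integrable_sup_dist_estimator[OF \<mu> c] estimator_in_cube[where c = c, OF c] Mean_in_cube[OF \<mu>]
  by (intro nn_integral_eq_integral) (auto simp: sup_dist_nonneg)

lemma empirical_mean_square_error:
  assumes \<mu>: "prob_on_cantor \<mu>" and "n > 0"
  shows "integrable (PiM {..<n} (\<lambda>_. \<mu>)) (\<lambda>S. (empirical_mean n S t - Mean \<mu> t)\<^sup>2)"
    and "(\<integral>S. (empirical_mean n S t - Mean \<mu> t)\<^sup>2 \<partial>PiM {..<n} (\<lambda>_. \<mu>)) \<le> 1 / real n"
proof -
  interpret prob_space \<mu> using prob_on_cantorD(1)[OF \<mu>] .
  show "integrable (PiM {..<n} (\<lambda>_. \<mu>)) (\<lambda>S. (empirical_mean n S t - Mean \<mu> t)\<^sup>2)"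
    and "(\<integral>S. (empirical_mean n S t - Mean \<mu> t)\<^sup>2 \<partial>PiM {..<n} (\<lambda>_. \<mu>)) \<le> 1 / real n"
    using sample_mean_square_error[of "\<lambda>x. if x t then 1 else 0", OF _ _ \<open>n > 0\<close>] \<mu>
    by (simp_all add: empirical_mean_def Mean_def)
qed

lemma sup_dist_estimator_le:
  assumes c: "\<And>i. c i \<in> cube" and q: "q \<in> cube" and "i\<^sub>0 \<le> grid_size n" "\<delta> > 0"
  shows "sup_dist (estimator c n S) q \<le> 3 * sup_dist (c i\<^sub>0) q + 1 / (real n + 1) + \<delta>
    + (\<Sum>t\<in>test_coords c (1 / (real n + 1)) (grid_size n). (empirical_mean n S t - q t)\<^sup>2) / \<delta>"
proof -
  let ?T = "test_coords c (1 / (real n + 1)) (grid_size n)"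
  let ?\<Sigma> = "\<Sum>t\<in>?T. (empirical_mean n S t - q t)\<^sup>2"
  have "\<bar>empirical_mean n S t - q t\<bar> \<le> \<delta> / 2 + ?\<Sigma> / (2 * \<delta>)" if "t \<in> ?T" for t
  proof -
    have "(empirical_mean n S t - q t)\<^sup>2 \<le> ?\<Sigma>"
      using that finite_test_coords by (intro member_le_sum) auto
    then have "(empirical_mean n S t - q t)\<^sup>2 / (2 * \<delta>) \<le> ?\<Sigma> / (2 * \<delta>)"
      using \<open>\<delta> > 0\<close> by (intro divide_right_mono) auto
    then show ?thesis
      using abs_le_half_plus_square_div[OF \<open>\<delta> > 0\<close>, of "empirical_mean n S t - q t"] by linarith
  qed
  then have "sup_dist (estimator c n S) q
      \<le> 3 * sup_dist (c i\<^sub>0) q + 1 / (real n + 1) + 2 * (\<delta> / 2 + ?\<Sigma> / (2 * \<delta>))"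
    unfolding estimator_def estimator_index_def
    using c q finite_test_coords test_coords_witness \<open>i\<^sub>0 \<le> grid_size n\<close>
    by (intro sup_dist_min_dist_index_le) auto
  then show ?thesis by simp
qed

lemma integral_sup_dist_estimator_le:
  assumes \<mu>: "prob_on_cantor \<mu>" and c: "\<And>i. c i \<in> cube"
    and "n > 0" "i\<^sub>0 \<le> grid_size n" "\<delta> > 0"
  shows "(\<integral>S. sup_dist (estimator c n S) (Mean \<mu>) \<partial>PiM {..<n} (\<lambda>_. \<mu>))
           \<le> 3 * sup_dist (c i\<^sub>0) (Mean \<mu>) + 1 / (real n + 1) + \<delta>
             + (real (grid_size n) + 1)\<^sup>2 / (real n * \<delta>)"
proof -
  let ?P = "PiM {..<n} (\<lambda>_. \<mu>)"
  interpret P: prob_space ?P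
    by (rule prob_space_PiM) (rule prob_on_cantorD(1)[OF \<mu>])
  let ?N = "grid_size n" and ?q = "Mean \<mu>"
  let ?T = "test_coords c (1 / (real n + 1)) ?N"
  define \<Sigma> where "\<Sigma> S = (\<Sum>t\<in>?T. (empirical_mean n S t - ?q t)\<^sup>2)" for S
  note square_error = empirical_mean_square_error[OF \<mu> \<open>n > 0\<close>]
  have integrable_\<Sigma>: "integrable ?P \<Sigma>"
    unfolding \<Sigma>_def using square_error by simp
  have "(\<integral>S. \<Sigma> S \<partial>?P) = (\<Sum>t\<in>?T. \<integral>S. (empirical_mean n S t - ?q t)\<^sup>2 \<partial>?P)"
    unfolding \<Sigma>_def by (rule Bochner_Integration.integral_sum) (rule square_error(1))
  also have "\<dots> \<le> (\<Sum>t\<in>?T. 1 / real n)"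
    by (rule sum_mono) (rule square_error(2))
  also have "\<dots> \<le> (real ?N + 1)\<^sup>2 / real n"
  proof -
    have "real (card ?T) \<le> real ((?N + 1)\<^sup>2)"
      using card_test_coords_le by (rule of_nat_mono)
    then show ?thesis by (simp add: divide_right_mono add.commute)
  qed
  finally have expected_\<Sigma>: "(\<integral>S. \<Sigma> S \<partial>?P) / \<delta> \<le> (real ?N + 1)\<^sup>2 / (real n * \<delta>)"
    using \<open>\<delta> > 0\<close> by (metis divide_divide_eq_left divide_right_mono less_imp_le)
  have pointwise: "sup_dist (estimator c n S) ?q
      \<le> 3 * sup_dist (c i\<^sub>0) ?q + 1 / (real n + 1) + \<delta> + \<Sigma> S / \<delta>" for S
    unfolding \<Sigma>_def
    by (rule sup_dist_estimator_le[where c = c, OF c Mean_in_cube[OF \<mu>] assms(4,5)])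
  have "(\<integral>S. sup_dist (estimator c n S) ?q \<partial>?P)
      \<le> (\<integral>S. 3 * sup_dist (c i\<^sub>0) ?q + 1 / (real n + 1) + \<delta> + \<Sigma> S / \<delta> \<partial>?P)"
    using integrable_sup_dist_estimator[where c = c, OF \<mu> c] integrable_\<Sigma> pointwise
    by (intro integral_mono) auto
  also have "\<dots> = 3 * sup_dist (c i\<^sub>0) ?q + 1 / (real n + 1) + \<delta> + (\<integral>S. \<Sigma> S \<partial>?P) / \<delta>"
    using integrable_\<Sigma> by (simp add: P.prob_space)
  finally show ?thesis
    using expected_\<Sigma> by linarith
qed

section \<open>Consistency\<close>

lemma eventually_le_grid_size: "eventually (\<lambda>n. i \<le> grid_size n) sequentially"
proof -
  have "filterlim (\<lambda>n. real n powr (1/3)) at_top sequentially"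
    by real_asymp
  then have "eventually (\<lambda>n. real i \<le> real n powr (1/3)) sequentially"
    unfolding filterlim_at_top by blast
  then show ?thesis
    unfolding grid_size_def by eventually_elim (use le_nat_floor in blast)
qed

lemma grid_size_square_div_tendsto_zero: "(\<lambda>n. (real (grid_size n) + 1)\<^sup>2 / real n) \<longlonglongrightarrow> 0"
proof (rule tendsto_sandwich[where f = "\<lambda>_. 0" and h = "\<lambda>n. (real n powr (1/3) + 1)\<^sup>2 / real n"])
  show "(\<lambda>n. (real n powr (1/3) + 1)\<^sup>2 / real n) \<longlonglongrightarrow> 0"
    by real_asymp
  have "real (grid_size n) \<le> real n powr (1/3)" for n
    unfolding grid_size_def by simp
  then show "eventually (\<lambda>n. (real (grid_size n) + 1)\<^sup>2 / real n
      \<le> (real n powr (1/3) + 1)\<^sup>2 / real n) sequentially"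
    by (intro always_eventually allI divide_right_mono power_mono) auto
qed auto

lemma integral_sup_dist_estimator_tendsto_zero:
  assumes \<mu>: "prob_on_cantor \<mu>" and c: "\<And>i. c i \<in> cube"
    and dense: "\<And>\<epsilon>. \<epsilon> > 0 \<Longrightarrow> \<exists>i. sup_dist (c i) (Mean \<mu>) < \<epsilon>"
  shows "(\<lambda>n. \<integral>S. sup_dist (estimator c n S) (Mean \<mu>) \<partial>PiM {..<n} (\<lambda>_. \<mu>)) \<longlonglongrightarrow> 0"
proof (rule order_tendstoI)
  fix a :: real assume "a < 0"
  with integral_sup_dist_estimator_nonneg[OF \<mu> c]
  show "eventually (\<lambda>n. a < \<integral>S. sup_dist (estimator c n S) (Mean \<mu>) \<partial>PiM {..<n} (\<lambda>_. \<mu>))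
      sequentially"
    by (intro always_eventually) (auto intro: less_le_trans)
next
  fix \<epsilon> :: real assume "\<epsilon> > 0"
  then obtain i\<^sub>0 where i\<^sub>0: "sup_dist (c i\<^sub>0) (Mean \<mu>) < \<epsilon> / 12"
    using dense[of "\<epsilon> / 12"] by auto
  define \<delta> where "\<delta> = \<epsilon> / 4"
  have "\<delta> > 0" using \<open>\<epsilon> > 0\<close> by (simp add: \<delta>_def)
  have "eventually (\<lambda>n. 1 / (real n + 1) < \<epsilon> / 4) sequentially"
    using \<open>\<epsilon> > 0\<close> by real_asymp
  moreover have "eventually (\<lambda>n. (real (grid_size n) + 1)\<^sup>2 / real n < \<delta> * (\<epsilon> / 4)) sequentially"
    using grid_size_square_div_tendsto_zero \<open>\<delta> > 0\<close> \<open>\<epsilon> > 0\<close> by (intro order_tendstoD(2)) auto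
  ultimately show "eventually (\<lambda>n. (\<integral>S. sup_dist (estimator c n S) (Mean \<mu>) \<partial>PiM {..<n} (\<lambda>_. \<mu>)) < \<epsilon>)
      sequentially"
    using eventually_le_grid_size[of i\<^sub>0] eventually_gt_at_top[of 0]
  proof eventually_elim
    case (elim n)
    have "(real (grid_size n) + 1)\<^sup>2 / (real n * \<delta>) < \<epsilon> / 4"
      using elim(2) elim(4) \<open>\<delta> > 0\<close> by (simp add: field_simps)
    then show ?case
      using integral_sup_dist_estimator_le[where c = c, OF \<mu> c elim(4) elim(3) \<open>\<delta> > 0\<close>] elim(1) i\<^sub>0
      unfolding \<delta>_def by linarith
  qed
qed

lemma separable_in_means_imp_dense_sequence:
  assumes "separable_in_means Q"
  shows "\<exists>c :: nat \<Rightarrow> nat \<Rightarrow> real. (\<forall>i. c i \<in> cube) \<and> (\<forall>\<mu>\<in>Q. \<forall>\<epsilon>>0. \<exists>i. sup_dist (c i) (Mean \<mu>) < \<epsilon>)"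
proof -
  have "\<exists>C. countable C \<and> C \<subseteq> cube \<and> (\<forall>q\<in>Mean ` Q. \<exists>p\<in>C. sup_dist q p < 1 / (real k + 1))"
    for k :: nat
  proof -
    have "1 / (real k + 1) > 0" by simp
    with assms show ?thesis unfolding separable_in_means_def by blast
  qed
  then obtain C where C: "\<And>k. countable (C k)" "\<And>k. C k \<subseteq> cube"
    "\<And>k q. q \<in> Mean ` Q \<Longrightarrow> \<exists>p\<in>C k. sup_dist q p < 1 / (real k + 1)"
    by metis
  define D where "D = insert (\<lambda>_. 0) (\<Union>k. C k)"
  have "countable D" "D \<noteq> {}" "D \<subseteq> cube"
    using C(1,2) by (auto simp: D_def cube_def)
  define c where "c = from_nat_into D"
  have "c i \<in> cube" for i
    using from_nat_into[OF \<open>D \<noteq> {}\<close>] \<open>D \<subseteq> cube\<close> by (auto simp: c_def)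
  moreover have "\<exists>i. sup_dist (c i) (Mean \<mu>) < \<epsilon>" if "\<mu> \<in> Q" "\<epsilon> > 0" for \<mu> \<epsilon>
  proof -
    obtain k :: nat where "inverse (real (Suc k)) < \<epsilon>"
      using reals_Archimedean[OF \<open>\<epsilon> > 0\<close>] by blast
    then have "1 / (real k + 1) < \<epsilon>"
      by (simp add: inverse_eq_divide add.commute)
    moreover obtain p where "p \<in> C k" "sup_dist (Mean \<mu>) p < 1 / (real k + 1)"
      using C(3)[of "Mean \<mu>" k] \<open>\<mu> \<in> Q\<close> by auto
    moreover have "p \<in> D"
      using \<open>p \<in> C k\<close> by (auto simp: D_def)
    then have "c (to_nat_on D p) = p"
      unfolding c_def by (rule from_nat_into_to_nat_on[OF \<open>countable D\<close>])
    then have "sup_dist (c (to_nat_on D p)) (Mean \<mu>) = sup_dist (Mean \<mu>) p"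
      by (simp add: sup_dist_commute)
    ultimately show ?thesis by (intro exI[of _ "to_nat_on D p"]) linarith
  qed
  ultimately show ?thesis by blast
qed

theorem theorem2:
  assumes "\<forall>\<mu>\<in>Q. prob_on_cantor \<mu>"
    and "separable_in_means Q"
  shows "UME_learnable Q"
proof -
  obtain c :: "nat \<Rightarrow> nat \<Rightarrow> real" where c: "\<And>i. c i \<in> cube"
    and dense: "\<And>\<mu> \<epsilon>. \<mu> \<in> Q \<Longrightarrow> \<epsilon> > 0 \<Longrightarrow> \<exists>i. sup_dist (c i) (Mean \<mu>) < \<epsilon>"
    using separable_in_means_imp_dense_sequence[OF assms(2)] by blast
  have "(\<lambda>n. \<integral>\<^sup>+S. ennreal (sup_dist (estimator c n S) (Mean \<mu>)) \<partial>PiM {..<n} (\<lambda>_. \<mu>)) \<longlonglongrightarrow> 0"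
    if "\<mu> \<in> Q" for \<mu>
  proof -
    have \<mu>: "prob_on_cantor \<mu>" using assms(1) that by blast
    show ?thesis
      unfolding nn_integral_sup_dist_estimator_eq[OF \<mu> c]
        ennreal_tendsto_0_iff[OF integral_sup_dist_estimator_nonneg[OF \<mu> c]]
      by (rule integral_sup_dist_estimator_tendsto_zero[OF \<mu> c dense[OF that]])
  qed
  then show ?thesis
    unfolding UME_learnable_def using measurable_estimator estimator_in_cube[where c = c, OF c]
    by (intro exI[of _ "estimator c"]) blast
qed

end
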